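(* We may fix a basis for $\mathcal{M}_k^j(\rho)$ such that $G$ is of standard form, i.e. $G=\Omega_j\,\mathrm{diag}\{\omega_1,\dots,\omega_k\}$ (equivalently, up to a permutation, $G$ has the $k$ distinct eigenvalues $\Omega_j\omega_r$, $r=1,\dots,k$, each of multiplicity one).
   Context: Non-singular monad matrices are $(A,B,C,D)$ with $A\in GL(k,\mathbb{C})$, $B\in Mat_{k\times k}(\mathbb{C})$, $C\in Mat_{k\times 2}(\mathbb{C})$, $D\in Mat_{2\times k}(\mathbb{C})$, satisfying $[A,B]+CD=0$ and the full-rank conditions, up to $(A,B,C,D)\sim(hAh^{-1},hBh^{-1},hC,Dh^{-1})$; $C_p$, $D_p$ denote the $p$-th column of $C$ and row of $D$. Fix $j\in\mathbb{Z}_{2k}$ even and $\omega\in(-\pi,\pi)$. $\mathcal{M}_k^j(\rho)$ is the set of such matrices for which there is $g\in GL(k,\mathbb{C})$ with $e^{\imath\frac{j\pi}{k}}A=gAg^{-1}$, $e^{\imath\frac{\pi}{k}}B=g(B-C_1D_1A^{-1})g^{-1}$, $e^{\imath\frac{\pi}{2k}}e^{\imath\frac{j\pi}{4k}}C_1=e^{\imath\omega}gC_2$, $e^{\imath\frac{\pi}{2k}}e^{\imath\frac{3j\pi}{4k}}C_2=e^{-\imath\omega}gAC_1$, $e^{\imath\frac{\pi}{2k}}e^{\imath\frac{3j\pi}{4k}}D_1=e^{-\imath\omega}D_2g^{-1}$, $e^{\imath\frac{\pi}{2k}}e^{\imath\frac{j\pi}{4k}}D_2=e^{\imath\omega}D_1A^{-1}g^{-1}$.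 $G=e^{-\imath\frac{j\pi}{2k}}g^2A$, which satisfies $e^{\imath\frac{2j\pi}{k}}A=GAG^{-1}$, $e^{\imath\frac{2\pi}{k}}B=GBG^{-1}$, $e^{\imath\frac{\pi}{k}}C=GC\,\mathrm{adj}(\sigma_{2j\pi/k})$, $e^{\imath\frac{\pi}{k}}D=\sigma_{2j\pi/k}DG^{-1}$ with $\sigma_\varphi=\mathrm{diag}(e^{-\imath\frac{3\varphi}{4}},e^{-\imath\frac{\varphi}{4}})$, $\mathrm{adj}(\sigma)=\det(\sigma)\sigma^{-1}$. Notation: $\Omega_j=e^{\imath\frac{(2-j)\pi}{2k}}$, $\omega_r=e^{\imath\frac{2\pi r}{k}}$. *)

theory Defs
  imports Complex_Main "Jordan_Normal_Form.Matrix"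
begin

definition minv :: "complex mat \<Rightarrow> complex mat" where
  "minv M = (SOME N. inverts_mat M N \<and> inverts_mat N M)"

abbreviation expi :: "real \<Rightarrow> complex" where
  "expi t \<equiv> cis t"

definition colC :: "complex mat \<Rightarrow> nat \<Rightarrow> complex mat" where
  "colC C p = mat_of_cols (dim_row C) [col C (p - 1)]"

definition rowD :: "complex mat \<Rightarrow> nat \<Rightarrow> complex mat" where
  "rowD D p = mat_of_rows (dim_col D) [row D (p - 1)]"

definition nonsingular_monad :: "nat \<Rightarrow> complex mat \<Rightarrow> complex mat \<Rightarrow> complex mat \<Rightarrow> complex mat \<Rightarrow> bool" where
  "nonsingular_monad k A B C D \<longleftrightarrow>
     A \<in> carrier_mat k k \<and> invertible_mat A \<and> B \<in> carrier_mat k k \<and>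
     C \<in> carrier_mat k 2 \<and> D \<in> carrier_mat 2 k \<and>
     A * B - B * A + C * D = 0\<^sub>m k k \<and>
     (\<forall>z w. (\<forall>y \<in> carrier_vec k. \<exists>x1 \<in> carrier_vec k. \<exists>x2 \<in> carrier_vec k. \<exists>x3 \<in> carrier_vec 2.
                 (A - z \<cdot>\<^sub>m 1\<^sub>m k) *\<^sub>v x1 + (B - w \<cdot>\<^sub>m 1\<^sub>m k) *\<^sub>v x2 + C *\<^sub>v x3 = y) \<and>
             (\<forall>x \<in> carrier_vec k. (A - z \<cdot>\<^sub>m 1\<^sub>m k) *\<^sub>v x = 0\<^sub>v k \<and> (B - w \<cdot>\<^sub>m 1\<^sub>m k) *\<^sub>v x = 0\<^sub>v k
                 \<and> D *\<^sub>v x = 0\<^sub>v 2 \<longrightarrow> x = 0\<^sub>v k))"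

definition symmetry_witness :: "nat \<Rightarrow> int \<Rightarrow> real \<Rightarrow> complex mat \<Rightarrow> complex mat \<Rightarrow> complex mat \<Rightarrow> complex mat \<Rightarrow> complex mat \<Rightarrow> bool" where
  "symmetry_witness k j \<omega> A B C D g \<longleftrightarrow>
     g \<in> carrier_mat k k \<and> invertible_mat g \<and>
     expi (j * pi / k) \<cdot>\<^sub>m A = g * A * minv g \<and>
     expi (pi / k) \<cdot>\<^sub>m B = g * (B - colC C 1 * rowD D 1 * minv A) * minv g \<and>
     (expi (pi / (2 * k)) * expi (j * pi / (4 * k))) \<cdot>\<^sub>m colC C 1 = expi \<omega> \<cdot>\<^sub>m (g * colC C 2) \<and>
     (expi (pi / (2 * k)) * expi (3 * j * pi / (4 * k))) \<cdot>\<^sub>m colC C 2 = expi (- \<omega>) \<cdot>\<^sub>m (g * A * colC C 1) \<and>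
     (expi (pi / (2 * k)) * expi (3 * j * pi / (4 * k))) \<cdot>\<^sub>m rowD D 1 = expi (- \<omega>) \<cdot>\<^sub>m (rowD D 2 * minv g) \<and>
     (expi (pi / (2 * k)) * expi (j * pi / (4 * k))) \<cdot>\<^sub>m rowD D 2 = expi \<omega> \<cdot>\<^sub>m (rowD D 1 * minv A * minv g)"

definition in_Mkj :: "nat \<Rightarrow> int \<Rightarrow> real \<Rightarrow> complex mat \<Rightarrow> complex mat \<Rightarrow> complex mat \<Rightarrow> complex mat \<Rightarrow> bool" where
  "in_Mkj k j \<omega> A B C D \<longleftrightarrow> nonsingular_monad k A B C D \<and> (\<exists>g. symmetry_witness k j \<omega> A B C D g)"

definition bigG :: "nat \<Rightarrow> int \<Rightarrow> complex mat \<Rightarrow> complex mat \<Rightarrow> complex mat" where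
  "bigG k j g A = expi (- (j * pi / (2 * k))) \<cdot>\<^sub>m (g * g * A)"

definition Omega :: "nat \<Rightarrow> int \<Rightarrow> complex" where
  "Omega k j = expi ((2 - j) * pi / (2 * k))"

definition omega_r :: "nat \<Rightarrow> nat \<Rightarrow> complex" where
  "omega_r k r = expi (2 * pi * r / k)"

end

(* With zeta = e^(i j pi/k) and xi = e^(i pi/k), the relations defining g make
   G = e^(-i j pi/2k) g^2 A twist the monad data: g G = zeta G g, G A = zeta^2 A G,
   G B = xi^2 B G, C_1 is an eigenvector of G, and D_1, D_2 are left eigenvectors of G.
   Hence the spectrum of G is stable under division by zeta, and the full-rank condition makes
   it stable under multiplication by xi^2 as well: if an eigenvalue had no xi^2-successor, B and D
   would vanish on the A-cyclic subspace of one of its eigenvectors, and an eigenvector of A in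
   that subspace would violate injectivity.  Starting from the eigenvalue of C_1 (C is nonzero by
   surjectivity) this produces the k distinct eigenvalues Omega_j omega_r, so G is diagonalizable
   with exactly these eigenvalues. *)

theory Submission
  imports Defs "Jordan_Normal_Form.Schur_Decomposition" "Jordan_Normal_Form.Determinant"
begin

lemma minv_inverse:
  assumes M: "M \<in> carrier_mat n n" and inv: "invertible_mat M"
  shows minv_carrier_mat: "minv M \<in> carrier_mat n n"
    and mult_minv: "M * minv M = 1\<^sub>m n"
    and minv_mult: "minv M * M = 1\<^sub>m n"
proof -
  from inv obtain N where "inverts_mat M N \<and> inverts_mat N M"
    unfolding invertible_mat_def by blast
  hence "inverts_mat M (minv M) \<and> inverts_mat (minv M) M"
    unfolding minv_def by (rule someI)
  hence right: "M * minv M = 1\<^sub>m n" and left: "minv M * M = 1\<^sub>m (dim_row (minv M))"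
    using M unfolding inverts_mat_def by auto
  have "dim_col (minv M) = n" using arg_cong[OF right, of dim_col] by simp
  moreover have rows: "dim_row (minv M) = n" using arg_cong[OF left, of dim_col] M by simp
  ultimately show "minv M \<in> carrier_mat n n" by auto
  show "M * minv M = 1\<^sub>m n" by (fact right)
  show "minv M * M = 1\<^sub>m n" using left rows by simp
qed

lemma minv_eqI:
  assumes M: "M \<in> carrier_mat n n" and N: "N \<in> carrier_mat n n"
    and MN: "M * N = 1\<^sub>m n" and NM: "N * M = 1\<^sub>m n"
  shows "minv M = N"
proof -
  have "invertible_mat M" unfolding invertible_mat_def inverts_mat_def
    using M N MN NM by (auto intro!: exI[of _ N])
  note inv = minv_inverse[OF M this]
  have "minv M = minv M * (M * N)" unfolding MN using inv(1) by simp
  also have "\<dots> = (minv M * M) * N" using assoc_mult_mat[OF inv(1) M N] by simp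
  also have "\<dots> = N" using inv N by simp
  finally show ?thesis .
qed

lemma minv_mult_vec_cancel:
  assumes M: "M \<in> carrier_mat n n" and inv: "invertible_mat M" and y: "y \<in> carrier_vec n"
  shows "minv M *\<^sub>v (M *\<^sub>v y) = y" and "M *\<^sub>v (minv M *\<^sub>v y) = y"
  using minv_inverse[OF M inv] M y
  by (simp_all flip: assoc_mult_mat_vec[of _ n n _ n y])

text \<open>The library states these laws with carrier premises; with dimension equations instead
  the simplifier can discharge the side conditions.\<close>

lemma mult_mat_vec_assoc_dim[simp]:
  "dim_col A = dim_row B \<Longrightarrow> dim_col B = dim_vec v \<Longrightarrow> (A * B) *\<^sub>v v = A *\<^sub>v (B *\<^sub>v v)"
  by (rule assoc_mult_mat_vec) (auto intro: carrier_matI carrier_vecI)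

lemma smult_mat_mult_vec_dim[simp]:
  "dim_vec v = dim_col A \<Longrightarrow> (c \<cdot>\<^sub>m A) *\<^sub>v v = (c :: 'a :: comm_ring_1) \<cdot>\<^sub>v (A *\<^sub>v v)"
  by (intro eq_vecI) (auto simp: scalar_prod_def sum_distrib_left ac_simps)

lemma mult_mat_vec_smult_dim[simp]:
  "dim_vec v = dim_col A \<Longrightarrow> A *\<^sub>v (c \<cdot>\<^sub>v v) = (c :: 'a :: field) \<cdot>\<^sub>v (A *\<^sub>v v)"
  by (rule mult_mat_vec) (auto intro: carrier_matI carrier_vecI)

lemma mult_mat_vec_add_dim[simp]:
  "dim_vec v = dim_col A \<Longrightarrow> dim_vec w = dim_col A \<Longrightarrow>
    A *\<^sub>v (v + w) = A *\<^sub>v v + (A :: 'a :: semiring_0 mat) *\<^sub>v w"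
  by (rule mult_add_distrib_mat_vec) (auto intro: carrier_matI carrier_vecI)

lemma mult_mat_vec_minus_dim[simp]:
  "dim_vec v = dim_col A \<Longrightarrow> dim_vec w = dim_col A \<Longrightarrow>
    A *\<^sub>v (v - w) = A *\<^sub>v v - (A :: 'a :: ring mat) *\<^sub>v w"
  by (rule mult_minus_distrib_mat_vec) (auto intro: carrier_matI carrier_vecI)

lemma minus_mat_mult_vec_dim[simp]:
  "dim_row B = dim_row A \<Longrightarrow> dim_col B = dim_col A \<Longrightarrow> dim_vec v = dim_col A \<Longrightarrow>
    (A - B) *\<^sub>v v = A *\<^sub>v v - (B :: 'a :: ring mat) *\<^sub>v v"
  by (rule minus_mult_distrib_mat_vec) (auto intro: carrier_matI carrier_vecI)

lemma add_mat_mult_vec_dim[simp]: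
  "dim_row B = dim_row A \<Longrightarrow> dim_col B = dim_col A \<Longrightarrow> dim_vec v = dim_col A \<Longrightarrow>
    (A + B) *\<^sub>v v = A *\<^sub>v v + (B :: 'a :: semiring_0 mat) *\<^sub>v v"
  by (rule add_mult_distrib_mat_vec) (auto intro: carrier_matI carrier_vecI)

lemma pow_mat_commute:
  assumes M: "M \<in> carrier_mat n n" and L: "L \<in> carrier_mat n n" and LM: "L * M = M * L"
  shows "L * M ^\<^sub>m i = M ^\<^sub>m i * L"
proof (induct i)
  case 0
  show ?case using M L by simp
next
  case (Suc i)
  have Mi: "M ^\<^sub>m i \<in> carrier_mat n n" using M by simp
  have "L * M ^\<^sub>m Suc i = (L * M ^\<^sub>m i) * M" using assoc_mult_mat[OF L Mi M] by simp
  also have "\<dots> = M ^\<^sub>m i * (L * M)" unfolding Suc using assoc_mult_mat[OF Mi L M] .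
  also have "\<dots> = M ^\<^sub>m Suc i * L" unfolding LM using assoc_mult_mat[OF Mi M L] by simp
  finally show ?case .
qed

lemma pow_mat_Suc_mult_vec:
  assumes "M \<in> carrier_mat n n" and "v \<in> carrier_vec n"
  shows "M ^\<^sub>m Suc i *\<^sub>v v = M *\<^sub>v (M ^\<^sub>m i *\<^sub>v v)"
proof -
  have "M ^\<^sub>m Suc i = M * M ^\<^sub>m i" using pow_mat_commute[OF assms(1) assms(1) refl, of i] by simp
  thus ?thesis using assms by simp
qed

section \<open>Eigenvectors in cyclic subspaces\<close>

lemma upper_triangular_mult_vec_nth:
  assumes T: "T \<in> carrier_mat n n" "upper_triangular T" and w: "w \<in> carrier_vec n"
    and supp: "\<And>l. t < l \<Longrightarrow> l < n \<Longrightarrow> w $ l = 0" and i: "t \<le> i" "i < n"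
  shows "(T *\<^sub>v w) $ i = T $$ (i, i) * w $ i"
proof -
  have "(T *\<^sub>v w) $ i = (\<Sum>l\<in>{0..<n}. T $$ (i, l) * w $ l)"
    using T w i by (simp add: scalar_prod_def)
  also have "\<dots> = T $$ (i, i) * w $ i + (\<Sum>l\<in>{0..<n} - {i}. T $$ (i, l) * w $ l)"
    using i by (subst sum.remove[of _ i]) auto
  also have "(\<Sum>l\<in>{0..<n} - {i}. T $$ (i, l) * w $ l) = 0"
  proof (intro sum.neutral ballI)
    fix l assume l: "l \<in> {0..<n} - {i}"
    show "T $$ (i, l) * w $ l = 0"
    proof (cases "l < i")
      case True
      thus ?thesis using T i unfolding upper_triangular_def by auto
    next
      case False
      thus ?thesis using supp l i by auto
    qed
  qed
  finally show ?thesis by simp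
qed

lemma shift_mult_vec_eq_0_iff:
  assumes "A \<in> carrier_mat n n" "y \<in> carrier_vec n"
  shows "(A - a \<cdot>\<^sub>m 1\<^sub>m n) *\<^sub>v y = 0\<^sub>v n \<longleftrightarrow> A *\<^sub>v y = a \<cdot>\<^sub>v (y :: 'a :: field vec)"
  using assms by (auto simp: vec_eq_iff)

text \<open>Shifting by the diagonal entry of \<open>T\<close> at the last nonzero coordinate of \<open>Q x\<close> strictly
  shortens that support, until the shift kills the vector.\<close>

lemma eigenvector_in_shift_stable_set_triangular:
  fixes M :: "'a :: field mat"
  assumes M: "M \<in> carrier_mat n n" and S: "S \<subseteq> carrier_vec n"
    and shift: "\<And>x \<mu>. x \<in> S \<Longrightarrow> (M - \<mu> \<cdot>\<^sub>m 1\<^sub>m n) *\<^sub>v x \<in> S"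
    and T: "T \<in> carrier_mat n n" "upper_triangular T" and Q: "Q \<in> carrier_mat n n"
    and QM: "Q * M = T * Q" and Q_inj: "\<And>x. x \<in> carrier_vec n \<Longrightarrow> Q *\<^sub>v x = 0\<^sub>v n \<Longrightarrow> x = 0\<^sub>v n"
    and x: "x \<in> S" "x \<noteq> 0\<^sub>v n" and supp: "\<And>i. t \<le> i \<Longrightarrow> i < n \<Longrightarrow> (Q *\<^sub>v x) $ i = 0"
  shows "\<exists>y\<in>S. \<exists>z. eigenvector M y z"
  using x supp
proof (induct t arbitrary: x)
  case 0
  have xc: "x \<in> carrier_vec n" using 0 S by auto
  have "Q *\<^sub>v x = 0\<^sub>v n" using 0 Q xc by (intro eq_vecI) auto
  with 0 Q_inj[OF xc] show ?case by simp
next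
  case (Suc t x)
  have xc: "x \<in> carrier_vec n" using Suc S by auto
  define \<mu> where "\<mu> = T $$ (t, t)"
  define y where "y = (M - \<mu> \<cdot>\<^sub>m 1\<^sub>m n) *\<^sub>v x"
  have y: "y = M *\<^sub>v x - \<mu> \<cdot>\<^sub>v x" unfolding y_def using M xc by simp
  show ?case
  proof (cases "y = 0\<^sub>v n")
    case True
    hence "M *\<^sub>v x = \<mu> \<cdot>\<^sub>v x" using shift_mult_vec_eq_0_iff[OF M xc] unfolding y_def by simp
    thus ?thesis using Suc M xc unfolding eigenvector_def by auto
  next
    case False
    define w where "w = Q *\<^sub>v x"
    have w: "w \<in> carrier_vec n" unfolding w_def using Q xc by simp
    have "Q *\<^sub>v y = (Q * M) *\<^sub>v x - \<mu> \<cdot>\<^sub>v w"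
      unfolding y w_def using Q M xc by simp
    also have "(Q * M) *\<^sub>v x = T *\<^sub>v w" unfolding QM w_def using T Q xc by simp
    finally have Qy: "Q *\<^sub>v y = T *\<^sub>v w - \<mu> \<cdot>\<^sub>v w" .
    have supp: "w $ l = 0" if "t < l" "l < n" for l
      using Suc.prems(3) that unfolding w_def by simp
    have "(Q *\<^sub>v y) $ i = 0" if i: "t \<le> i" "i < n" for i
    proof -
      have "(Q *\<^sub>v y) $ i = (T $$ (i, i) - \<mu>) * w $ i"
        unfolding Qy using upper_triangular_mult_vec_nth[OF T w supp i] T w i
        by (simp add: algebra_simps)
      thus ?thesis using supp[of i] i unfolding \<mu>_def by (cases "i = t") auto
    qed
    from Suc.hyps[OF _ False this] show ?thesis using shift[OF Suc.prems(1)] unfolding y_def by blast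
  qed
qed

lemma eigenvector_in_shift_stable_set:
  fixes M :: "complex mat"
  assumes M: "M \<in> carrier_mat n n" and S: "S \<subseteq> carrier_vec n"
    and shift: "\<And>x \<mu>. x \<in> S \<Longrightarrow> (M - \<mu> \<cdot>\<^sub>m 1\<^sub>m n) *\<^sub>v x \<in> S"
    and x: "x \<in> S" "x \<noteq> 0\<^sub>v n"
  shows "\<exists>y\<in>S. \<exists>z. eigenvector M y z"
proof -
  obtain es where "char_poly M = (\<Prod>a\<leftarrow>es. [:- a, 1:])" using char_poly_factorized[OF M] by blast
  from schur_decomposition_exists[OF M this] obtain T where
    T: "T \<in> carrier_mat n n" "upper_triangular T" and "similar_mat M T" by blast
  then obtain P Q where "similar_mat_wit M T P Q" unfolding similar_mat_def by blast
  note wit = similar_mat_witD[OF carrier_matD(1)[OF M, symmetric] this]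
  have PQ: "P * Q = 1\<^sub>m n" and QP: "Q * P = 1\<^sub>m n" and MPTQ: "M = P * T * Q"
    and P: "P \<in> carrier_mat n n" and Q: "Q \<in> carrier_mat n n" using wit by simp_all
  have "Q * M = (Q * P) * (T * Q)"
    unfolding MPTQ using P T Q by (simp add: assoc_mult_mat[of Q n n P n "T * Q" n])
  hence QM: "Q * M = T * Q" using QP T Q by simp
  have Q_inj: "x = 0\<^sub>v n" if "x \<in> carrier_vec n" "Q *\<^sub>v x = 0\<^sub>v n" for x
  proof -
    have "(P * Q) *\<^sub>v x = 0\<^sub>v n" using P Q that by auto
    thus ?thesis unfolding PQ using that by simp
  qed
  show ?thesis
    by (rule eigenvector_in_shift_stable_set_triangular[OF M S shift T Q QM _ x, where t = n])
      (auto intro: Q_inj)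
qed

text \<open>The vectors annihilated by every matrix that annihilates all \<open>M\<^sup>i v\<close>: this is the cyclic
  subspace generated by \<open>v\<close>, described dually so that its stability under \<open>M\<close> is immediate.\<close>

definition cyclic_closure :: "'a :: field mat \<Rightarrow> 'a vec \<Rightarrow> 'a vec set" where
  "cyclic_closure M v = {x \<in> carrier_vec (dim_row M). \<forall>L m. L \<in> carrier_mat m (dim_row M) \<longrightarrow>
     (\<forall>i. L *\<^sub>v (M ^\<^sub>m i *\<^sub>v v) = 0\<^sub>v m) \<longrightarrow> L *\<^sub>v x = 0\<^sub>v m}"

lemma cyclic_closure_annihilated:
  assumes "x \<in> cyclic_closure M v" "L \<in> carrier_mat m (dim_row M)"
    "\<And>i. L *\<^sub>v (M ^\<^sub>m i *\<^sub>v v) = 0\<^sub>v m"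
  shows "L *\<^sub>v x = 0\<^sub>v m"
  using assms unfolding cyclic_closure_def by blast

lemma self_in_cyclic_closure:
  assumes "M \<in> carrier_mat n n" "v \<in> carrier_vec n"
  shows "v \<in> cyclic_closure M v"
proof -
  have "L *\<^sub>v v = 0\<^sub>v m"
    if "L \<in> carrier_mat m n" "\<forall>i. L *\<^sub>v (M ^\<^sub>m i *\<^sub>v v) = 0\<^sub>v m" for L m
    using that(2)[rule_format, of 0] assms by simp
  thus ?thesis using assms unfolding cyclic_closure_def by auto
qed

lemma cyclic_closure_shift:
  assumes M: "M \<in> carrier_mat n n" and v: "v \<in> carrier_vec n" and x: "x \<in> cyclic_closure M v"
  shows "(M - \<mu> \<cdot>\<^sub>m 1\<^sub>m n) *\<^sub>v x \<in> cyclic_closure M v"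
proof -
  have xc: "x \<in> carrier_vec n" using x M unfolding cyclic_closure_def by auto
  have "L *\<^sub>v ((M - \<mu> \<cdot>\<^sub>m 1\<^sub>m n) *\<^sub>v x) = 0\<^sub>v m"
    if L: "L \<in> carrier_mat m n" and ann: "\<And>i. L *\<^sub>v (M ^\<^sub>m i *\<^sub>v v) = 0\<^sub>v m" for L m
  proof -
    have "(L * M) *\<^sub>v (M ^\<^sub>m i *\<^sub>v v) = 0\<^sub>v m" for i
    proof -
      have "(L * M) *\<^sub>v (M ^\<^sub>m i *\<^sub>v v) = L *\<^sub>v (M ^\<^sub>m Suc i *\<^sub>v v)"
        unfolding pow_mat_Suc_mult_vec[OF M v] using L M v by simp
      also have "\<dots> = 0\<^sub>v m" by (rule ann)
      finally show ?thesis .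
    qed
    hence LM: "L *\<^sub>v (M *\<^sub>v x) = 0\<^sub>v m"
      using cyclic_closure_annihilated[OF x, of "L * M"] L M xc by simp
    have Lx: "L *\<^sub>v x = 0\<^sub>v m" using cyclic_closure_annihilated[OF x, of L] L M ann by simp
    have "L *\<^sub>v ((M - \<mu> \<cdot>\<^sub>m 1\<^sub>m n) *\<^sub>v x) = L *\<^sub>v (M *\<^sub>v x) - \<mu> \<cdot>\<^sub>v (L *\<^sub>v x)"
      using L M xc by simp
    also have "\<dots> = 0\<^sub>v m" unfolding LM Lx by (intro eq_vecI) auto
    finally show ?thesis .
  qed
  thus ?thesis using M xc unfolding cyclic_closure_def by auto
qed

lemma eigenvector_in_cyclic_closure:
  fixes M :: "complex mat"
  assumes M: "M \<in> carrier_mat n n" and v: "v \<in> carrier_vec n" "v \<noteq> 0\<^sub>v n"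
  shows "\<exists>x\<in>cyclic_closure M v. \<exists>z. eigenvector M x z"
  by (rule eigenvector_in_shift_stable_set[OF M _ cyclic_closure_shift[OF M v(1)]
      self_in_cyclic_closure[OF M v(1)] v(2)])
    (use M in \<open>auto simp: cyclic_closure_def\<close>)

lemma eigenvectorD:
  assumes "M \<in> carrier_mat n n" "eigenvector M v \<mu>"
  shows "v \<in> carrier_vec n" "v \<noteq> 0\<^sub>v n" "M *\<^sub>v v = \<mu> \<cdot>\<^sub>v v"
  using assms unfolding eigenvector_def by auto

lemma eigenvalueI:
  assumes "M \<in> carrier_mat n n" "v \<in> carrier_vec n" "v \<noteq> 0\<^sub>v n" "M *\<^sub>v v = \<mu> \<cdot>\<^sub>v v"
  shows "eigenvalue M \<mu>"
  using assms unfolding eigenvalue_def eigenvector_def by auto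

lemma common_eigenvector_of_commuting:
  fixes A B :: "complex mat"
  assumes A: "A \<in> carrier_mat n n" and B: "B \<in> carrier_mat n n" and AB: "A * B = B * A"
    and n: "0 < n"
  shows "\<exists>x a b. eigenvector A x a \<and> eigenvector B x b"
proof -
  have "unit_vec n 0 \<noteq> (0\<^sub>v n :: complex vec)"
    using n by (metis index_unit_vec(1) index_zero_vec(1) zero_neq_one)
  with eigenvector_in_cyclic_closure[OF A unit_vec_carrier]
  obtain x0 a where "eigenvector A x0 a" by blast
  note x0 = eigenvectorD[OF A this]
  from eigenvector_in_cyclic_closure[OF B x0(1,2)]
  obtain x b where x: "x \<in> cyclic_closure B x0" and Bx: "eigenvector B x b" by blast
  note xB = eigenvectorD[OF B Bx]
  have ann: "(A - a \<cdot>\<^sub>m 1\<^sub>m n) *\<^sub>v (B ^\<^sub>m i *\<^sub>v x0) = 0\<^sub>v n" for i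
  proof -
    have Bi: "B ^\<^sub>m i \<in> carrier_mat n n" using B by simp
    have "A *\<^sub>v (B ^\<^sub>m i *\<^sub>v x0) = (A * B ^\<^sub>m i) *\<^sub>v x0" using A Bi x0 by simp
    also have "A * B ^\<^sub>m i = B ^\<^sub>m i * A" by (rule pow_mat_commute[OF B A AB])
    also have "(B ^\<^sub>m i * A) *\<^sub>v x0 = a \<cdot>\<^sub>v (B ^\<^sub>m i *\<^sub>v x0)"
      using A Bi x0 mult_mat_vec[OF Bi x0(1)] by simp
    finally show ?thesis using shift_mult_vec_eq_0_iff[OF A] Bi x0 by simp
  qed
  have "(A - a \<cdot>\<^sub>m 1\<^sub>m n) *\<^sub>v x = 0\<^sub>v n"
    using cyclic_closure_annihilated[OF x _ ann] minus_carrier_mat[of _ n n A] A B by simp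
  hence "A *\<^sub>v x = a \<cdot>\<^sub>v x" using shift_mult_vec_eq_0_iff[OF A xB(1)] by simp
  thus ?thesis using Bx xB A unfolding eigenvector_def by auto
qed
section \<open>Diagonalization by distinct eigenvalues\<close>

lemma nonzero_vec_nth:
  assumes "v \<in> carrier_vec n" "v \<noteq> 0\<^sub>v n"
  shows "\<exists>r<n. v $ r \<noteq> 0"
  using assms by (auto simp: vec_eq_iff)

lemma row_combination_mult_mat_vec:
  fixes G :: "'a :: comm_semiring_0 mat"
  assumes G: "G \<in> carrier_mat n n" and v: "\<And>i. i \<in> I \<Longrightarrow> v i \<in> carrier_vec n" and r: "r < n"
  shows "(\<Sum>i\<in>I. c i * (G *\<^sub>v v i) $ r) = (\<Sum>l<n. G $$ (r, l) * (\<Sum>i\<in>I. c i * v i $ l))"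
proof -
  have "(\<Sum>i\<in>I. c i * (G *\<^sub>v v i) $ r) = (\<Sum>i\<in>I. \<Sum>l<n. c i * (G $$ (r, l) * v i $ l))"
  proof (rule sum.cong[OF refl])
    fix i assume "i \<in> I"
    hence "dim_vec (v i) = n" using v by auto
    thus "c i * (G *\<^sub>v v i) $ r = (\<Sum>l<n. c i * (G $$ (r, l) * v i $ l))"
      using r G by (simp add: scalar_prod_def lessThan_atLeast0 sum_distrib_left)
  qed
  also have "\<dots> = (\<Sum>l<n. \<Sum>i\<in>I. c i * (G $$ (r, l) * v i $ l))"
    by (rule sum.swap)
  also have "\<dots> = (\<Sum>l<n. G $$ (r, l) * (\<Sum>i\<in>I. c i * v i $ l))"
    unfolding sum_distrib_left by (intro sum.cong refl) (simp add: ac_simps)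
  finally show ?thesis .
qed

lemma eigenvectors_linearly_independent:
  fixes G :: "complex mat" and m :: nat
  assumes G: "G \<in> carrier_mat n n" and v: "\<And>i. i < m \<Longrightarrow> eigenvector G (v i) (\<mu> i)"
    and inj: "inj_on \<mu> {..<m}"
    and comb: "\<And>r. r < n \<Longrightarrow> (\<Sum>i<m. c i * v i $ r) = 0"
  shows "\<forall>i<m. c i = 0"
  using v inj comb
proof (induct m arbitrary: c)
  case 0
  thus ?case by simp
next
  case (Suc m c)
  note vSuc = eigenvectorD[OF G Suc.prems(1)]
  have dim_v: "dim_vec (v i) = n" if "i < Suc m" for i using vSuc(1)[OF that] by simp
  have eig_comb: "(\<Sum>i<Suc m. (c i * \<mu> i) * v i $ r) = 0" if r: "r < n" for r
  proof -
    have "(\<Sum>i<Suc m. (c i * \<mu> i) * v i $ r) = (\<Sum>i<Suc m. c i * (G *\<^sub>v v i) $ r)"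
      using vSuc(3) dim_v r by (intro sum.cong refl) simp
    also have "\<dots> = (\<Sum>l<n. G $$ (r, l) * (\<Sum>i<Suc m. c i * v i $ l))"
      by (rule row_combination_mult_mat_vec[OF G _ r]) (use vSuc(1) in auto)
    also have "\<dots> = 0" using Suc.prems(3) by simp
    finally show ?thesis .
  qed
  have comb': "(\<Sum>i<m. (c i * (\<mu> i - \<mu> m)) * v i $ r) = 0" if r: "r < n" for r
  proof -
    have "(\<Sum>i<m. (c i * (\<mu> i - \<mu> m)) * v i $ r) = (\<Sum>i<Suc m. (c i * (\<mu> i - \<mu> m)) * v i $ r)"
      by simp
    also have "\<dots> = (\<Sum>i<Suc m. (c i * \<mu> i) * v i $ r - \<mu> m * (c i * v i $ r))"
      by (intro sum.cong refl) (simp add: algebra_simps)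
    also have "\<dots> = (\<Sum>i<Suc m. (c i * \<mu> i) * v i $ r) - \<mu> m * (\<Sum>i<Suc m. c i * v i $ r)"
      by (simp only: sum_subtractf sum_distrib_left)
    also have "\<dots> = 0" using eig_comb[OF r] Suc.prems(3)[OF r] by simp
    finally show ?thesis .
  qed
  have "inj_on \<mu> {..<m}" using Suc.prems(2) by (auto simp: inj_on_def)
  with Suc.prems(1) comb' have "\<forall>i<m. c i * (\<mu> i - \<mu> m) = 0" by (intro Suc.hyps) auto
  moreover have "\<mu> i \<noteq> \<mu> m" if "i < m" for i
    using Suc.prems(2) that unfolding inj_on_def by force
  ultimately have cz: "\<forall>i<m. c i = 0" by auto
  obtain r where r: "r < n" "v m $ r \<noteq> 0" using nonzero_vec_nth vSuc(1,2)[of m] by blast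
  have "c m * v m $ r = 0" using Suc.prems(3)[OF r(1)] cz by simp
  hence "c m = 0" using r by simp
  thus ?case using cz less_Suc_eq by auto
qed

lemma diagonalizable_of_distinct_eigenvalues:
  fixes G :: "complex mat"
  assumes G: "G \<in> carrier_mat n n" and ev: "\<And>i. i < n \<Longrightarrow> eigenvalue G (\<mu> i)"
    and inj: "inj_on \<mu> {..<n}"
  shows "\<exists>h. h \<in> carrier_mat n n \<and> invertible_mat h \<and> h * G * minv h = mat_diag n \<mu>"
proof -
  define v where "v i = (SOME v. eigenvector G v (\<mu> i))" for i
  have v: "eigenvector G (v i) (\<mu> i)" if "i < n" for i
    using ev[OF that] unfolding v_def eigenvalue_def by (rule someI_ex)
  define P where "P = Matrix.mat n n (\<lambda>(r, i). v i $ r)"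
  have P: "P \<in> carrier_mat n n" unfolding P_def by simp
  have "det P \<noteq> 0"
  proof
    assume "det P = 0"
    then obtain c where c: "c \<in> carrier_vec n" "c \<noteq> 0\<^sub>v n" "P *\<^sub>v c = 0\<^sub>v n"
      using det_0_iff_vec_prod_zero[OF P] by blast
    have "(\<Sum>i<n. c $ i * v i $ r) = 0" if r: "r < n" for r
    proof -
      have "(P *\<^sub>v c) $ r = (\<Sum>i<n. c $ i * v i $ r)" using r c(1) unfolding P_def
        by (simp add: scalar_prod_def lessThan_atLeast0 mult.commute)
      thus ?thesis using c r by simp
    qed
    from eigenvectors_linearly_independent[OF G v inj this] have "c = 0\<^sub>v n"
      using c by (intro eq_vecI) auto
    thus False using c by simp
  qed
  from det_non_zero_imp_unit[OF P this, of "()"]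
  obtain h where h: "h \<in> carrier_mat n n" and hP: "h * P = 1\<^sub>m n" and Ph: "P * h = 1\<^sub>m n"
    unfolding Units_def ring_mat_simps by auto
  have "invertible_mat h" unfolding invertible_mat_def inverts_mat_def
    using h P hP Ph by (auto intro!: exI[of _ P])
  have GP: "G * P = P * mat_diag n \<mu>"
  proof (rule eq_matI)
    fix r i assume "r < dim_row (P * mat_diag n \<mu>)" "i < dim_col (P * mat_diag n \<mu>)"
    hence r: "r < n" and i: "i < n" using P mat_diag_dim[of n \<mu>] by auto
    have "col P i = v i" using eigenvectorD(1)[OF G v[OF i]] i unfolding P_def by (intro eq_vecI) auto
    hence "(G * P) $$ (r, i) = (G *\<^sub>v v i) $ r" using G P r i by simp
    also have "\<dots> = \<mu> i * v i $ r" using eigenvectorD[OF G v[OF i]] r by auto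
    finally show "(G * P) $$ (r, i) = (P * mat_diag n \<mu>) $$ (r, i)"
      unfolding mat_diag_mult_right[OF P] using r i by (simp add: P_def)
  qed (use G P carrier_matD[OF mat_diag_dim[of n \<mu>]] in auto)
  have "h * G * minv h = h * (G * P)" unfolding minv_eqI[OF h P hP Ph] using h G P by simp
  also have "\<dots> = (h * P) * mat_diag n \<mu>"
    unfolding GP using assoc_mult_mat[OF h P mat_diag_dim[of n \<mu>]] by simp
  also have "\<dots> = mat_diag n \<mu>" unfolding hP by (rule left_mult_one_mat[OF mat_diag_dim])
  finally show ?thesis using h \<open>invertible_mat h\<close> by blast
qed

section \<open>Non-singular monads\<close>

lemma transpose_eigenvector_orthogonal_shift:
  assumes A: "A \<in> carrier_mat n n" and f: "eigenvector (transpose_mat A) f z"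
    and x: "x \<in> carrier_vec n"
  shows "f \<bullet> ((A - z \<cdot>\<^sub>m 1\<^sub>m n) *\<^sub>v x) = 0"
proof -
  have At: "transpose_mat A \<in> carrier_mat n n" using A by simp
  note fA = eigenvectorD[OF At f]
  have "f \<bullet> ((A - z \<cdot>\<^sub>m 1\<^sub>m n) *\<^sub>v x) = f \<bullet> (A *\<^sub>v x) - z * (f \<bullet> x)"
    using A x fA(1) by (simp add: scalar_prod_minus_distrib[of f n])
  also have "f \<bullet> (A *\<^sub>v x) = (transpose_mat A *\<^sub>v f) \<bullet> x"
    using transpose_vec_mult_scalar[OF A x fA(1)] by simp
  finally show ?thesis using fA x by simp
qed

lemma nonsingular_monad_C_nonzero:
  assumes monad: "nonsingular_monad k A B C D" and k: "0 < k"
  shows "C \<noteq> 0\<^sub>m k 2"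
proof
  assume C0: "C = 0\<^sub>m k 2"
  have A: "A \<in> carrier_mat k k" and B: "B \<in> carrier_mat k k" and D: "D \<in> carrier_mat 2 k"
    and comm: "A * B - B * A + C * D = 0\<^sub>m k k"
    and surj: "\<And>z w y. y \<in> carrier_vec k \<Longrightarrow> \<exists>x1 \<in> carrier_vec k. \<exists>x2 \<in> carrier_vec k.
       \<exists>x3 \<in> carrier_vec 2. (A - z \<cdot>\<^sub>m 1\<^sub>m k) *\<^sub>v x1 + (B - w \<cdot>\<^sub>m 1\<^sub>m k) *\<^sub>v x2 + C *\<^sub>v x3 = y"
    using monad unfolding nonsingular_monad_def by blast+
  have "A * B = B * A"
  proof (rule eq_matI)
    fix i j assume "i < dim_row (B * A)" "j < dim_col (B * A)"
    hence i: "i < k" and j: "j < k" using A B by auto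
    have "(A * B - B * A + C * D) $$ (i, j) = 0" unfolding comm using i j by simp
    moreover have "(C * D) $$ (i, j) = 0" unfolding C0 using i j D by (simp add: scalar_prod_def)
    ultimately show "(A * B) $$ (i, j) = (B * A) $$ (i, j)"
      using i j A B D unfolding C0 by (simp add: carrier_matD)
  qed (use A B in simp_all)
  hence "transpose_mat A * transpose_mat B = transpose_mat B * transpose_mat A"
    using transpose_mult[OF A B] transpose_mult[OF B A] by simp
  then obtain f z w where fA: "eigenvector (transpose_mat A) f z"
    and fB: "eigenvector (transpose_mat B) f w"
    using common_eigenvector_of_commuting[of "transpose_mat A" k "transpose_mat B"] A B k by auto
  have f: "f \<in> carrier_vec k" "f \<noteq> 0\<^sub>v k" using eigenvectorD[OF _ fA] A by auto
  then obtain p where p: "p < k" "f $ p \<noteq> 0" using nonzero_vec_nth by blast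
  from surj[OF unit_vec_carrier[of k p], of z w] obtain x1 x2 x3
    where x: "x1 \<in> carrier_vec k" "x2 \<in> carrier_vec k" "x3 \<in> carrier_vec 2"
    and eq: "(A - z \<cdot>\<^sub>m 1\<^sub>m k) *\<^sub>v x1 + (B - w \<cdot>\<^sub>m 1\<^sub>m k) *\<^sub>v x2 + C *\<^sub>v x3 = unit_vec k p"
    by blast
  have "C *\<^sub>v x3 = 0\<^sub>v k" unfolding C0 using x(3) by (intro eq_vecI) (auto simp: scalar_prod_def)
  moreover have "A - z \<cdot>\<^sub>m 1\<^sub>m k \<in> carrier_mat k k" "B - w \<cdot>\<^sub>m 1\<^sub>m k \<in> carrier_mat k k"
    by (intro minus_carrier_mat smult_carrier_mat one_carrier_mat)+
  ultimately have sum_eq: "unit_vec k p = (A - z \<cdot>\<^sub>m 1\<^sub>m k) *\<^sub>v x1 + (B - w \<cdot>\<^sub>m 1\<^sub>m k) *\<^sub>v x2"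
    using eq x by (simp del: minus_mat_mult_vec_dim)
  hence "f $ p = f \<bullet> ((A - z \<cdot>\<^sub>m 1\<^sub>m k) *\<^sub>v x1 + (B - w \<cdot>\<^sub>m 1\<^sub>m k) *\<^sub>v x2)"
    unfolding sum_eq[symmetric] using p by simp
  also have "\<dots> = f \<bullet> ((A - z \<cdot>\<^sub>m 1\<^sub>m k) *\<^sub>v x1) + f \<bullet> ((B - w \<cdot>\<^sub>m 1\<^sub>m k) *\<^sub>v x2)"
    by (rule scalar_prod_add_distrib[OF f(1)]) (use A B x in auto)
  also have "\<dots> = 0"
    using transpose_eigenvector_orthogonal_shift[OF A fA x(1)]
      transpose_eigenvector_orthogonal_shift[OF B fB x(2)] by simp
  finally show False using p by simp
qed

lemma nonsingular_monad_kernel: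
  assumes monad: "nonsingular_monad k A B C D" and x: "x \<in> carrier_vec k"
    and Ax: "A *\<^sub>v x = z \<cdot>\<^sub>v x" and Bx: "B *\<^sub>v x = 0\<^sub>v k" and Dx: "D *\<^sub>v x = 0\<^sub>v 2"
  shows "x = 0\<^sub>v k"
proof -
  have A: "A \<in> carrier_mat k k" and B: "B \<in> carrier_mat k k"
    and inj: "\<And>z w. (A - z \<cdot>\<^sub>m 1\<^sub>m k) *\<^sub>v x = 0\<^sub>v k \<Longrightarrow> (B - w \<cdot>\<^sub>m 1\<^sub>m k) *\<^sub>v x = 0\<^sub>v k
      \<Longrightarrow> D *\<^sub>v x = 0\<^sub>v 2 \<Longrightarrow> x = 0\<^sub>v k"
    using monad x unfolding nonsingular_monad_def by blast+
  have "B *\<^sub>v x = 0 \<cdot>\<^sub>v x" using Bx x by (auto simp: vec_eq_iff)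
  thus ?thesis using inj[OF _ _ Dx] Ax shift_mult_vec_eq_0_iff[OF A x] shift_mult_vec_eq_0_iff[OF B x]
    by blast
qed

lemma twisted_eigenvector_pow:
  assumes G: "G \<in> carrier_mat n n" and A: "A \<in> carrier_mat n n"
    and GA: "\<And>y. y \<in> carrier_vec n \<Longrightarrow> G *\<^sub>v (A *\<^sub>v y) = \<alpha> \<cdot>\<^sub>v (A *\<^sub>v (G *\<^sub>v y))"
    and v: "v \<in> carrier_vec n" and Gv: "G *\<^sub>v v = \<mu> \<cdot>\<^sub>v v"
  shows "G *\<^sub>v (A ^\<^sub>m i *\<^sub>v v) = (\<mu> * \<alpha> ^ i) \<cdot>\<^sub>v (A ^\<^sub>m i *\<^sub>v (v :: 'a :: field vec))"
proof (induct i)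
  case 0
  show ?case using G A v Gv by simp
next
  case (Suc i)
  have w: "A ^\<^sub>m i *\<^sub>v v \<in> carrier_vec n" by (rule mult_mat_vec_carrier[OF pow_carrier_mat[OF A] v])
  have "G *\<^sub>v (A ^\<^sub>m Suc i *\<^sub>v v) = \<alpha> \<cdot>\<^sub>v (A *\<^sub>v (G *\<^sub>v (A ^\<^sub>m i *\<^sub>v v)))"
    unfolding pow_mat_Suc_mult_vec[OF A v] by (rule GA[OF w])
  also have "\<dots> = (\<mu> * \<alpha> ^ Suc i) \<cdot>\<^sub>v (A ^\<^sub>m Suc i *\<^sub>v v)"
    unfolding Suc pow_mat_Suc_mult_vec[OF A v] using A w by (simp add: smult_smult_assoc ac_simps)
  finally show ?case .
qed

text \<open>If neither alternative holds, \<open>B\<close> and \<open>D\<close> vanish on the \<open>A\<close>-cyclic subspace generated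
  by a \<open>\<mu>\<close>-eigenvector of \<open>G\<close>, and that subspace contains an eigenvector of \<open>A\<close>.\<close>

lemma eigenvalue_ladder:
  fixes G A B D :: "complex mat"
  assumes G: "G \<in> carrier_mat n n" and A: "A \<in> carrier_mat n n" and B: "B \<in> carrier_mat n n"
    and D: "D \<in> carrier_mat m n"
    and GA: "\<And>y. y \<in> carrier_vec n \<Longrightarrow> G *\<^sub>v (A *\<^sub>v y) = \<alpha> \<cdot>\<^sub>v (A *\<^sub>v (G *\<^sub>v y))"
    and GB: "\<And>y. y \<in> carrier_vec n \<Longrightarrow> G *\<^sub>v (B *\<^sub>v y) = \<beta> \<cdot>\<^sub>v (B *\<^sub>v (G *\<^sub>v y))"
    and DG: "\<And>r x. r < m \<Longrightarrow> x \<in> carrier_vec n \<Longrightarrow> row D r \<bullet> (G *\<^sub>v x) = \<nu> r * (row D r \<bullet> x)"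
    and kernel: "\<And>x z. x \<in> carrier_vec n \<Longrightarrow> A *\<^sub>v x = z \<cdot>\<^sub>v x \<Longrightarrow> B *\<^sub>v x = 0\<^sub>v n
      \<Longrightarrow> D *\<^sub>v x = 0\<^sub>v m \<Longrightarrow> x = 0\<^sub>v n"
    and ev: "eigenvalue G \<mu>"
  shows "\<exists>i. eigenvalue G (\<mu> * \<alpha> ^ i * \<beta>) \<or> (\<exists>r<m. \<nu> r = \<mu> * \<alpha> ^ i)"
proof (rule ccontr)
  assume "\<not> ?thesis"
  hence noB: "\<And>i. \<not> eigenvalue G (\<mu> * \<alpha> ^ i * \<beta>)"
    and noD: "\<And>i r. r < m \<Longrightarrow> \<nu> r \<noteq> \<mu> * \<alpha> ^ i" by auto
  from ev obtain v where "eigenvector G v \<mu>" unfolding eigenvalue_def by blast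
  note v = eigenvectorD[OF G this]
  note Gw = twisted_eigenvector_pow[OF G A GA v(1) v(3)]
  have w: "A ^\<^sub>m i *\<^sub>v v \<in> carrier_vec n" for i
    by (rule mult_mat_vec_carrier[OF pow_carrier_mat[OF A] v(1)])
  have B0: "B *\<^sub>v (A ^\<^sub>m i *\<^sub>v v) = 0\<^sub>v n" for i
  proof (rule ccontr)
    assume "B *\<^sub>v (A ^\<^sub>m i *\<^sub>v v) \<noteq> 0\<^sub>v n"
    moreover have "G *\<^sub>v (B *\<^sub>v (A ^\<^sub>m i *\<^sub>v v)) = (\<mu> * \<alpha> ^ i * \<beta>) \<cdot>\<^sub>v (B *\<^sub>v (A ^\<^sub>m i *\<^sub>v v))"
      using GB[OF w] Gw B carrier_vecD[OF w] by (simp add: smult_smult_assoc ac_simps)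
    ultimately have "eigenvector G (B *\<^sub>v (A ^\<^sub>m i *\<^sub>v v)) (\<mu> * \<alpha> ^ i * \<beta>)"
      unfolding eigenvector_def using G B w by auto
    with noB show False unfolding eigenvalue_def by blast
  qed
  have D0: "D *\<^sub>v (A ^\<^sub>m i *\<^sub>v v) = 0\<^sub>v m" for i
  proof (rule eq_vecI)
    fix r assume "r < dim_vec (0\<^sub>v m :: complex vec)"
    hence r: "r < m" by simp
    have "\<nu> r * (row D r \<bullet> (A ^\<^sub>m i *\<^sub>v v)) = (\<mu> * \<alpha> ^ i) * (row D r \<bullet> (A ^\<^sub>m i *\<^sub>v v))"
    proof -
      have "row D r \<in> carrier_vec n" by (rule carrier_vecI) (use D in auto)
      from scalar_prod_smult_distrib[OF this w]
      have "row D r \<bullet> (G *\<^sub>v (A ^\<^sub>m i *\<^sub>v v)) = (\<mu> * \<alpha> ^ i) * (row D r \<bullet> (A ^\<^sub>m i *\<^sub>v v))"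
        by (simp only: Gw)
      thus ?thesis using DG[OF r w] by simp
    qed
    hence "row D r \<bullet> (A ^\<^sub>m i *\<^sub>v v) = 0" using noD[OF r, of i] by (metis mult_cancel_right)
    thus "(D *\<^sub>v (A ^\<^sub>m i *\<^sub>v v)) $ r = (0\<^sub>v m) $ r" using D r by simp
  qed (use D in simp)
  obtain x z where x: "x \<in> cyclic_closure A v" and Ax: "eigenvector A x z"
    using eigenvector_in_cyclic_closure[OF A v(1,2)] by blast
  note xA = eigenvectorD[OF A Ax]
  have "B *\<^sub>v x = 0\<^sub>v n" using cyclic_closure_annihilated[OF x _ B0] A B by simp
  moreover have "D *\<^sub>v x = 0\<^sub>v m" using cyclic_closure_annihilated[OF x _ D0] A D by simp
  ultimately show False using kernel[OF xA(1,3)] xA(2) by blast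
qed

section \<open>The twisting matrix \<open>G\<close>\<close>

lemma omega_r_inj_on: "inj_on (\<lambda>i. omega_r k (i + 1)) {..<k}"
proof (rule inj_onI)
  fix p q assume p: "p \<in> {..<k}" and q: "q \<in> {..<k}" and eq: "omega_r k (p + 1) = omega_r k (q + 1)"
  hence kpos: "real k > 0" by simp
  define x where "x = 2 * pi * real (p + 1) / real k - 2 * pi * real (q + 1) / real k"
  have "cis x = omega_r k (p + 1) / omega_r k (q + 1)" unfolding x_def omega_r_def by (simp add: cis_divide)
  hence "cos x = 1" unfolding eq by (metis Re_complex_div_eq_0 cis.sel(1) divide_self_if cis_neq_zero one_complex.sel(1))
  then obtain n :: int where n: "x = real_of_int n * 2 * pi" using cos_one_2pi_int by blast
  have "real_of_int (int p - int q) = x * real k / (2 * pi)" unfolding x_def using kpos by (simp add: field_simps)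
  also have "\<dots> = real_of_int (n * int k)" unfolding n by simp
  finally have pq: "int p - int q = n * int k" by (simp only: of_int_eq_iff)
  show "p = q"
  proof (cases "n = 0")
    case True
    thus ?thesis using pq by simp
  next
    case False
    hence "1 \<le> \<bar>n\<bar>" by simp
    hence "\<bar>n * int k\<bar> \<ge> int k" using mult_right_mono[of 1 "\<bar>n\<bar>" "int k"] by (simp add: abs_mult)
    moreover have "\<bar>int p - int q\<bar> < int k" using p q by auto
    ultimately show ?thesis using pq by simp
  qed
qed

lemma colC_mult_vec: "dim_vec u = 1 \<Longrightarrow> colC C p *\<^sub>v u = (u $ 0) \<cdot>\<^sub>v col C (p - 1)"
  unfolding colC_def by (intro eq_vecI) (auto simp: mat_of_cols_def scalar_prod_def)

lemma rowD_mult_vec: "dim_vec x = dim_col D \<Longrightarrow> rowD D p *\<^sub>v x = vec 1 (\<lambda>_. row D (p - 1) \<bullet> x)"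
proof -
  have "vec (dim_col D) (($) (row D (p - 1))) = row D (p - 1)" by (intro eq_vecI) auto
  thus "dim_vec x = dim_col D \<Longrightarrow> ?thesis" unfolding rowD_def by (intro eq_vecI) (auto simp: mat_of_rows_def)
qed

lemma dim_colC[simp]: "dim_row (colC C p) = dim_row C" "dim_col (colC C p) = 1"
  unfolding colC_def by auto

lemma dim_rowD[simp]: "dim_row (rowD D p) = 1" "dim_col (rowD D p) = dim_col D"
  unfolding rowD_def by auto

locale symmetric_monad =
  fixes k :: nat and j :: int and \<omega> :: real and A B C D g :: "complex mat"
  assumes k_pos: "0 < k"
    and monad: "nonsingular_monad k A B C D"
    and witness: "symmetry_witness k j \<omega> A B C D g"
begin

definition "\<zeta> = expi (j * pi / k)"
definition "\<xi> = expi (pi / k)"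
definition "\<kappa> = expi (- (j * pi / (2 * k)))"
definition "\<tau>\<^sub>1 = expi (pi / (2 * k)) * expi (j * pi / (4 * k)) / expi \<omega>"
definition "\<tau>\<^sub>2 = expi (pi / (2 * k)) * expi (3 * j * pi / (4 * k)) / expi (- \<omega>)"

abbreviation "G \<equiv> bigG k j g A"

text \<open>Columns and rows are indexed from \<open>0\<close>: \<open>C\<^sub>p\<close> is \<open>col C (p - 1)\<close> and \<open>D\<^sub>p\<close> is
  \<open>row D (p - 1)\<close>.\<close>

lemma scalars_nonzero[simp]: "\<zeta> \<noteq> 0" "\<xi> \<noteq> 0" "\<kappa> \<noteq> 0" "\<tau>\<^sub>1 \<noteq> 0" "\<tau>\<^sub>2 \<noteq> 0"
  unfolding \<zeta>_def \<xi>_def \<kappa>_def \<tau>\<^sub>1_def \<tau>\<^sub>2_def by simp_all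

lemma tau_product: "\<tau>\<^sub>1 * \<tau>\<^sub>2 = \<xi> * \<zeta>"
proof -
  have "\<tau>\<^sub>1 * \<tau>\<^sub>2 = cis (pi / (2 * k) + j * pi / (4 * k) + (pi / (2 * k) + 3 * j * pi / (4 * k)))"
    unfolding \<tau>\<^sub>1_def \<tau>\<^sub>2_def by (simp add: cis_mult cis_divide)
  also have "\<dots> = cis (pi / k + j * pi / k)"
    using k_pos by (intro arg_cong[of _ _ cis]) (simp add: field_simps)
  also have "\<dots> = \<xi> * \<zeta>" unfolding \<xi>_def \<zeta>_def by (simp add: cis_mult)
  finally show ?thesis .
qed

lemma carriers:
  shows A_carrier: "A \<in> carrier_mat k k" and B_carrier: "B \<in> carrier_mat k k"
    and C_carrier: "C \<in> carrier_mat k 2" and D_carrier: "D \<in> carrier_mat 2 k"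
    and g_carrier: "g \<in> carrier_mat k k"
  using monad witness unfolding nonsingular_monad_def symmetry_witness_def by auto

lemma invertible: "invertible_mat A" "invertible_mat g"
  using monad witness unfolding nonsingular_monad_def symmetry_witness_def by auto

lemma dims[simp]:
  "dim_row A = k" "dim_col A = k" "dim_row B = k" "dim_col B = k" "dim_row C = k" "dim_col C = 2"
  "dim_row D = 2" "dim_col D = k" "dim_row g = k" "dim_col g = k"
  "dim_row (minv A) = k" "dim_col (minv A) = k" "dim_row (minv g) = k" "dim_col (minv g) = k"
  using carriers minv_carrier_mat[OF A_carrier invertible(1)]
    minv_carrier_mat[OF g_carrier invertible(2)] by auto

lemma minv_cancel[simp]:
  assumes "dim_vec y = k"
  shows "minv A *\<^sub>v (A *\<^sub>v y) = y" "A *\<^sub>v (minv A *\<^sub>v y) = y"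
    "minv g *\<^sub>v (g *\<^sub>v y) = y" "g *\<^sub>v (minv g *\<^sub>v y) = y"
  using minv_mult_vec_cancel[OF A_carrier invertible(1)] minv_mult_vec_cancel[OF g_carrier invertible(2)]
    assms by (auto intro: carrier_vecI)

lemma witness_eqs:
  shows twist_A: "\<zeta> \<cdot>\<^sub>m A = g * A * minv g"
    and twist_B: "\<xi> \<cdot>\<^sub>m B = g * (B - colC C 1 * rowD D 1 * minv A) * minv g"
    and twist_C1: "(expi (pi / (2 * k)) * expi (j * pi / (4 * k))) \<cdot>\<^sub>m colC C 1
      = expi \<omega> \<cdot>\<^sub>m (g * colC C 2)"
    and twist_C2: "(expi (pi / (2 * k)) * expi (3 * j * pi / (4 * k))) \<cdot>\<^sub>m colC C 2
      = expi (- \<omega>) \<cdot>\<^sub>m (g * A * colC C 1)"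
    and twist_D1: "(expi (pi / (2 * k)) * expi (3 * j * pi / (4 * k))) \<cdot>\<^sub>m rowD D 1
      = expi (- \<omega>) \<cdot>\<^sub>m (rowD D 2 * minv g)"
    and twist_D2: "(expi (pi / (2 * k)) * expi (j * pi / (4 * k))) \<cdot>\<^sub>m rowD D 2
      = expi \<omega> \<cdot>\<^sub>m (rowD D 1 * minv A * minv g)"
  using witness unfolding symmetry_witness_def \<zeta>_def \<xi>_def by auto

lemma g_A_twist: "dim_vec y = k \<Longrightarrow> g *\<^sub>v (A *\<^sub>v y) = \<zeta> \<cdot>\<^sub>v (A *\<^sub>v (g *\<^sub>v y))"
  using arg_cong[OF twist_A, of "\<lambda>M. M *\<^sub>v (g *\<^sub>v y)"] by simp

lemma g_B_twist:
  "dim_vec y = k \<Longrightarrow>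
    g *\<^sub>v (B *\<^sub>v y) = \<xi> \<cdot>\<^sub>v (B *\<^sub>v (g *\<^sub>v y)) + (row D 0 \<bullet> (minv A *\<^sub>v y)) \<cdot>\<^sub>v (g *\<^sub>v col C 0)"
  using arg_cong[OF twist_B, of "\<lambda>M. M *\<^sub>v (g *\<^sub>v y)"]
  by (auto simp: colC_mult_vec rowD_mult_vec vec_eq_iff)

lemma g_C2: "g *\<^sub>v col C 1 = \<tau>\<^sub>1 \<cdot>\<^sub>v col C 0"
  using arg_cong[OF twist_C1, of "\<lambda>M. M *\<^sub>v vec 1 (\<lambda>_. 1)"]
  unfolding \<tau>\<^sub>1_def by (auto simp: colC_mult_vec vec_eq_iff field_simps)

lemma g_A_C1: "g *\<^sub>v (A *\<^sub>v col C 0) = \<tau>\<^sub>2 \<cdot>\<^sub>v col C 1"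
  using arg_cong[OF twist_C2, of "\<lambda>M. M *\<^sub>v vec 1 (\<lambda>_. 1)"]
  unfolding \<tau>\<^sub>2_def by (auto simp: colC_mult_vec vec_eq_iff field_simps)

lemma D1_g: "dim_vec x = k \<Longrightarrow> \<tau>\<^sub>2 * (row D 0 \<bullet> (g *\<^sub>v x)) = row D 1 \<bullet> x"
  using arg_cong[OF twist_D1, of "\<lambda>M. (M *\<^sub>v (g *\<^sub>v x)) $ 0"]
  unfolding \<tau>\<^sub>2_def by (simp add: rowD_mult_vec field_simps)

lemma D2_g_A: "dim_vec x = k \<Longrightarrow> \<tau>\<^sub>1 * (row D 1 \<bullet> (g *\<^sub>v (A *\<^sub>v x))) = row D 0 \<bullet> x"
  using arg_cong[OF twist_D2, of "\<lambda>M. (M *\<^sub>v (g *\<^sub>v (A *\<^sub>v x))) $ 0"]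
  unfolding \<tau>\<^sub>1_def by (simp add: rowD_mult_vec field_simps)

lemma A_B_commutator:
  "dim_vec y = k \<Longrightarrow>
    A *\<^sub>v (B *\<^sub>v y) = B *\<^sub>v (A *\<^sub>v y) - (row D 0 \<bullet> y) \<cdot>\<^sub>v col C 0 - (row D 1 \<bullet> y) \<cdot>\<^sub>v col C 1"
proof -
  assume y: "dim_vec y = k"
  have comm: "A * B - B * A + C * D = 0\<^sub>m k k" using monad unfolding nonsingular_monad_def by blast
  have "A *\<^sub>v (B *\<^sub>v y) - B *\<^sub>v (A *\<^sub>v y) + C *\<^sub>v (D *\<^sub>v y) = (A * B - B * A + C * D) *\<^sub>v y"
    using y by simp
  also have "\<dots> = 0\<^sub>v k" unfolding comm using y by (intro eq_vecI) auto
  finally have sum0: "A *\<^sub>v (B *\<^sub>v y) - B *\<^sub>v (A *\<^sub>v y) + C *\<^sub>v (D *\<^sub>v y) = 0\<^sub>v k" .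
  have CD: "C *\<^sub>v (D *\<^sub>v y) = (row D 0 \<bullet> y) \<cdot>\<^sub>v col C 0 + (row D 1 \<bullet> y) \<cdot>\<^sub>v col C 1"
    using y by (intro eq_vecI) (auto simp: scalar_prod_def numeral_2_eq_2 mult.commute)
  show ?thesis
  proof (rule eq_vecI)
    fix i assume "i < dim_vec (B *\<^sub>v (A *\<^sub>v y) - (row D 0 \<bullet> y) \<cdot>\<^sub>v col C 0 - (row D 1 \<bullet> y) \<cdot>\<^sub>v col C 1)"
    hence i: "i < k" by simp
    have "(A *\<^sub>v (B *\<^sub>v y) - B *\<^sub>v (A *\<^sub>v y) + C *\<^sub>v (D *\<^sub>v y)) $ i = 0" using sum0 i by simp
    thus "(A *\<^sub>v (B *\<^sub>v y)) $ i = (B *\<^sub>v (A *\<^sub>v y) - (row D 0 \<bullet> y) \<cdot>\<^sub>v col C 0 - (row D 1 \<bullet> y) \<cdot>\<^sub>v col C 1) $ i"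
      unfolding CD using i by (simp add: algebra_simps)
  qed simp
qed

lemma G_mult_vec: "dim_vec y = k \<Longrightarrow> G *\<^sub>v y = \<kappa> \<cdot>\<^sub>v (g *\<^sub>v (g *\<^sub>v (A *\<^sub>v y)))"
  unfolding bigG_def \<kappa>_def by simp

lemma G_carrier: "G \<in> carrier_mat k k"
  unfolding bigG_def using carriers by simp

lemma dim_G[simp]: "dim_row G = k" "dim_col G = k"
  using G_carrier by auto

lemma g_G_twist: "dim_vec y = k \<Longrightarrow> g *\<^sub>v (G *\<^sub>v y) = \<zeta> \<cdot>\<^sub>v (G *\<^sub>v (g *\<^sub>v y))"
  using g_A_twist[of y] by (simp add: G_mult_vec smult_smult_assoc mult.commute)

lemma G_A_twist: "dim_vec y = k \<Longrightarrow> G *\<^sub>v (A *\<^sub>v y) = \<zeta>\<^sup>2 \<cdot>\<^sub>v (A *\<^sub>v (G *\<^sub>v y))"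
  using g_A_twist[of "A *\<^sub>v y"] g_A_twist[of "g *\<^sub>v (A *\<^sub>v y)"]
  by (simp add: G_mult_vec smult_smult_assoc power2_eq_square ac_simps)

lemma G_B_twist: "dim_vec y = k \<Longrightarrow> G *\<^sub>v (B *\<^sub>v y) = \<xi>\<^sup>2 \<cdot>\<^sub>v (B *\<^sub>v (G *\<^sub>v y))"
proof -
  assume y: "dim_vec y = k"
  define s\<^sub>1 s\<^sub>2 where "s\<^sub>1 = row D 0 \<bullet> y" and "s\<^sub>2 = row D 1 \<bullet> y"
  define W X where "W = g *\<^sub>v col C 0" and "X = B *\<^sub>v (g *\<^sub>v (g *\<^sub>v (A *\<^sub>v y)))"
  have [simp]: "dim_vec W = k" "dim_vec X = k" unfolding W_def X_def by simp_all
  have "g *\<^sub>v (g *\<^sub>v (A *\<^sub>v (B *\<^sub>v y)))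
      = g *\<^sub>v (g *\<^sub>v (B *\<^sub>v (A *\<^sub>v y))) - s\<^sub>1 \<cdot>\<^sub>v (g *\<^sub>v W) - (s\<^sub>2 * \<tau>\<^sub>1) \<cdot>\<^sub>v W"
    unfolding A_B_commutator[OF y] s\<^sub>1_def s\<^sub>2_def W_def using y g_C2 by (simp add: smult_smult_assoc)
  moreover have "g *\<^sub>v (B *\<^sub>v (A *\<^sub>v y)) = \<xi> \<cdot>\<^sub>v (B *\<^sub>v (g *\<^sub>v (A *\<^sub>v y))) + s\<^sub>1 \<cdot>\<^sub>v W"
    using g_B_twist[of "A *\<^sub>v y"] y unfolding s\<^sub>1_def W_def by simp
  moreover have "g *\<^sub>v (B *\<^sub>v (g *\<^sub>v (A *\<^sub>v y))) = \<xi> \<cdot>\<^sub>v X + (\<zeta> * s\<^sub>2 / \<tau>\<^sub>2) \<cdot>\<^sub>v W"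
  proof -
    have "minv A *\<^sub>v (g *\<^sub>v (A *\<^sub>v y)) = \<zeta> \<cdot>\<^sub>v (g *\<^sub>v y)" using g_A_twist[OF y] y by simp
    moreover have "row D 0 \<bullet> (g *\<^sub>v y) = s\<^sub>2 / \<tau>\<^sub>2"
      using D1_g[OF y] unfolding s\<^sub>2_def by (simp add: field_simps)
    ultimately show ?thesis using g_B_twist[of "g *\<^sub>v (A *\<^sub>v y)"] y unfolding X_def W_def by simp
  qed
  ultimately have "g *\<^sub>v (g *\<^sub>v (A *\<^sub>v (B *\<^sub>v y)))
      = \<xi> \<cdot>\<^sub>v (\<xi> \<cdot>\<^sub>v X + (\<zeta> * s\<^sub>2 / \<tau>\<^sub>2) \<cdot>\<^sub>v W) + s\<^sub>1 \<cdot>\<^sub>v (g *\<^sub>v W) - s\<^sub>1 \<cdot>\<^sub>v (g *\<^sub>v W) - (s\<^sub>2 * \<tau>\<^sub>1) \<cdot>\<^sub>v W"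
    using y by simp
  also have "\<dots> = \<xi>\<^sup>2 \<cdot>\<^sub>v X"
  proof -
    have "\<tau>\<^sub>1 = \<xi> * \<zeta> / \<tau>\<^sub>2" using tau_product by (simp add: field_simps)
    thus ?thesis by (auto simp: vec_eq_iff field_simps power2_eq_square)
  qed
  finally show ?thesis using y unfolding X_def by (simp add: G_mult_vec smult_smult_assoc mult.commute)
qed

lemma G_C1: "G *\<^sub>v col C 0 = (\<kappa> * \<xi> * \<zeta>) \<cdot>\<^sub>v col C 0"
  using g_A_C1 g_C2 tau_product by (simp add: G_mult_vec smult_smult_assoc ac_simps)

lemma D1_G: "dim_vec x = k \<Longrightarrow> row D 0 \<bullet> (G *\<^sub>v x) = \<kappa> / (\<xi> * \<zeta>) * (row D 0 \<bullet> x)"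
proof -
  assume x: "dim_vec x = k"
  have "\<tau>\<^sub>1 * \<tau>\<^sub>2 * (row D 0 \<bullet> (g *\<^sub>v (g *\<^sub>v (A *\<^sub>v x)))) = row D 0 \<bullet> x"
    using D1_g[of "g *\<^sub>v (A *\<^sub>v x)"] D2_g_A[OF x] x by (simp add: ac_simps)
  thus ?thesis using x tau_product by (simp add: G_mult_vec field_simps)
qed

lemma D2_G: "dim_vec x = k \<Longrightarrow> row D 1 \<bullet> (G *\<^sub>v x) = \<kappa> / \<xi> * (row D 1 \<bullet> x)"
proof -
  assume x: "dim_vec x = k"
  have "row D 1 \<bullet> (G *\<^sub>v x) = \<tau>\<^sub>2 * (row D 0 \<bullet> (g *\<^sub>v (G *\<^sub>v x)))" using D1_g[of "G *\<^sub>v x"] x by simp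
  also have "\<dots> = \<tau>\<^sub>2 * \<zeta> * (row D 0 \<bullet> (G *\<^sub>v (g *\<^sub>v x)))" using g_G_twist[OF x] x by simp
  also have "\<dots> = \<tau>\<^sub>2 * \<kappa> / \<xi> * (row D 0 \<bullet> (g *\<^sub>v x))" using D1_G[of "g *\<^sub>v x"] x by simp
  also have "\<dots> = \<kappa> / \<xi> * (row D 1 \<bullet> x)" using D1_g[OF x] by (simp add: field_simps)
  finally show ?thesis .
qed

lemma eigenvalue_G_div_zeta:
  assumes "eigenvalue G \<mu>"
  shows "eigenvalue G (\<mu> / \<zeta>)"
proof -
  from assms obtain v where "eigenvector G v \<mu>" unfolding eigenvalue_def by blast
  note v = eigenvectorD[OF G_carrier this]
  have dv: "dim_vec v = k" using v by simp
  have "g *\<^sub>v v \<noteq> 0\<^sub>v k"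
  proof
    assume gv: "g *\<^sub>v v = 0\<^sub>v k"
    have "v = minv g *\<^sub>v (g *\<^sub>v v)" using dv by simp
    also have "\<dots> = 0\<^sub>v k" unfolding gv by (intro eq_vecI) (auto simp: scalar_prod_def)
    finally show False using v by simp
  qed
  moreover have "G *\<^sub>v (g *\<^sub>v v) = (\<mu> / \<zeta>) \<cdot>\<^sub>v (g *\<^sub>v v)"
    using g_G_twist[OF dv] v by (auto simp: vec_eq_iff field_simps)
  ultimately show ?thesis using dv by (intro eigenvalueI[OF G_carrier]) (auto intro: carrier_vecI)
qed

lemma eigenvalue_G_div_zeta_pow: "eigenvalue G \<mu> \<Longrightarrow> eigenvalue G (\<mu> / \<zeta> ^ i)"
proof (induct i)
  case 0
  thus ?case by simp
next
  case (Suc i)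
  from eigenvalue_G_div_zeta[OF Suc.hyps[OF Suc.prems]] show ?case by (simp add: field_simps)
qed

lemma C1_nonzero: "col C 0 \<noteq> 0\<^sub>v k"
proof
  assume C1: "col C 0 = 0\<^sub>v k"
  hence "g *\<^sub>v (A *\<^sub>v col C 0) = 0\<^sub>v k" by (intro eq_vecI) (auto simp: scalar_prod_def)
  hence "\<tau>\<^sub>2 \<cdot>\<^sub>v col C 1 = 0\<^sub>v k" using g_A_C1 by simp
  hence C2: "col C 1 = 0\<^sub>v k" by (auto simp: vec_eq_iff)
  have "C = 0\<^sub>m k 2"
  proof (rule eq_matI)
    fix i p assume "i < dim_row (0\<^sub>m k 2 :: complex mat)" "p < dim_col (0\<^sub>m k 2 :: complex mat)"
    hence i: "i < k" and "p = 0 \<or> p = 1" by auto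
    thus "C $$ (i, p) = 0\<^sub>m k 2 $$ (i, p)"
      using arg_cong[OF C1, of "\<lambda>v. v $ i"] arg_cong[OF C2, of "\<lambda>v. v $ i"] by auto
  qed auto
  thus False using nonsingular_monad_C_nonzero[OF monad k_pos] by simp
qed

lemma eigenvalue_G_C1: "eigenvalue G (\<kappa> * \<xi> * \<zeta>)"
  by (rule eigenvalueI[OF G_carrier _ C1_nonzero G_C1]) (rule carrier_vecI, simp)

text \<open>The \<open>D\<close>-alternative of the ladder is harmless: the left eigenvalues of \<open>D\<^sub>1\<close> and \<open>D\<^sub>2\<close>,
  multiplied by \<open>\<xi>\<^sup>2\<close>, are \<open>\<zeta>\<close>-translates of the eigenvalue \<open>\<kappa> \<xi> \<zeta>\<close> of \<open>C\<^sub>1\<close>.\<close>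

lemma eigenvalue_G_mult_xi_sq:
  assumes ev: "eigenvalue G \<mu>"
  shows "eigenvalue G (\<mu> * \<xi>\<^sup>2)"
proof -
  define \<nu> where "\<nu> r = (if r = 0 then \<kappa> / (\<xi> * \<zeta>) else \<kappa> / \<xi>)" for r :: nat
  have "\<exists>i. eigenvalue G (\<mu> * (\<zeta>\<^sup>2) ^ i * \<xi>\<^sup>2) \<or> (\<exists>r<2. \<nu> r = \<mu> * (\<zeta>\<^sup>2) ^ i)"
  proof (rule eigenvalue_ladder[OF G_carrier A_carrier B_carrier D_carrier _ _ _ _ ev])
    show "G *\<^sub>v (A *\<^sub>v y) = \<zeta>\<^sup>2 \<cdot>\<^sub>v (A *\<^sub>v (G *\<^sub>v y))" if "y \<in> carrier_vec k" for y
      using G_A_twist that by auto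
    show "G *\<^sub>v (B *\<^sub>v y) = \<xi>\<^sup>2 \<cdot>\<^sub>v (B *\<^sub>v (G *\<^sub>v y))" if "y \<in> carrier_vec k" for y
      using G_B_twist that by auto
    show "row D r \<bullet> (G *\<^sub>v x) = \<nu> r * (row D r \<bullet> x)" if "r < 2" "x \<in> carrier_vec k" for r x
      using that D1_G D2_G unfolding \<nu>_def by (auto simp: less_2_cases_iff)
    show "x = 0\<^sub>v k" if "x \<in> carrier_vec k" "A *\<^sub>v x = z \<cdot>\<^sub>v x" "B *\<^sub>v x = 0\<^sub>v k" "D *\<^sub>v x = 0\<^sub>v 2"
      for x z
      using nonsingular_monad_kernel[OF monad that] .
  qed
  then obtain i where i: "eigenvalue G (\<mu> * (\<zeta>\<^sup>2) ^ i * \<xi>\<^sup>2) \<or> (\<exists>r<2. \<nu> r = \<mu> * (\<zeta>\<^sup>2) ^ i)"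
    by blast
  have pow: "(\<zeta>\<^sup>2) ^ i = \<zeta> ^ (2 * i)" by (simp add: power_mult)
  have C1_orbit: "eigenvalue G (\<kappa> * \<xi> * \<zeta> / \<zeta> ^ l)" for l
    by (rule eigenvalue_G_div_zeta_pow[OF eigenvalue_G_C1])
  from i consider (ev) "eigenvalue G (\<mu> * \<zeta> ^ (2 * i) * \<xi>\<^sup>2)"
    | (D1) "\<kappa> / (\<xi> * \<zeta>) = \<mu> * \<zeta> ^ (2 * i)" | (D2) "\<kappa> / \<xi> = \<mu> * \<zeta> ^ (2 * i)"
    unfolding pow \<nu>_def by (metis less_2_cases)
  thus ?thesis
  proof cases
    case ev
    from eigenvalue_G_div_zeta_pow[OF this, of "2 * i"] show ?thesis by simp
  next
    case D1
    hence eq: "\<mu> * \<xi>\<^sup>2 = \<kappa> * \<xi> * \<zeta> / \<zeta> ^ (2 * i + 2)" by (simp add: field_simps power2_eq_square)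
    show ?thesis unfolding eq by (rule C1_orbit)
  next
    case D2
    hence eq: "\<mu> * \<xi>\<^sup>2 = \<kappa> * \<xi> * \<zeta> / \<zeta> ^ (2 * i + 1)" by (simp add: field_simps power2_eq_square)
    show ?thesis unfolding eq by (rule C1_orbit)
  qed
qed

lemma eigenvalue_G_orbit: "eigenvalue G (\<kappa> * \<xi> * \<zeta> * (\<xi>\<^sup>2) ^ n)"
proof (induct n)
  case 0
  thus ?case using eigenvalue_G_C1 by simp
next
  case (Suc n)
  from eigenvalue_G_mult_xi_sq[OF this] show ?case by (simp add: ac_simps)
qed

lemma Omega_omega_r_in_orbit:
  assumes j: "j = 2 * int m" and m: "m < k"
  shows "Omega k j * omega_r k (i + 1) = \<kappa> * \<xi> * \<zeta> * (\<xi>\<^sup>2) ^ (i + 1 + k - m)"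
proof -
  have kpos: "real k > 0" using k_pos by simp
  have "\<kappa> * \<xi> * \<zeta> * (\<xi>\<^sup>2) ^ (i + 1 + k - m)
      = cis (- (j * pi / (2 * k)) + pi / k + j * pi / k + real (i + 1 + k - m) * (2 * pi / k))"
    unfolding \<kappa>_def \<xi>_def \<zeta>_def power2_eq_square cis_mult DeMoivre by (simp add: cis_mult)
  also have "\<dots> = cis ((2 - j) * pi / (2 * k) + 2 * pi * real (i + 1) / k + 2 * pi)"
    using m kpos unfolding j by (intro arg_cong[of _ _ cis]) (simp add: of_nat_diff field_simps)
  also have "\<dots> = Omega k j * omega_r k (i + 1)"
    unfolding Omega_def omega_r_def by (simp add: cis_mult[symmetric])
  finally show ?thesis ..
qed

lemma G_standard_form:
  assumes "j = 2 * int m" and "m < k"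
  shows "\<exists>h. h \<in> carrier_mat k k \<and> invertible_mat h \<and>
    h * G * minv h = Omega k j \<cdot>\<^sub>m mat_diag k (\<lambda>i. omega_r k (i + 1))"
proof -
  define \<mu> where "\<mu> i = Omega k j * omega_r k (i + 1)" for i
  have "Omega k j \<noteq> 0" unfolding Omega_def by simp
  hence "inj_on \<mu> {..<k}" using omega_r_inj_on unfolding inj_on_def \<mu>_def by simp
  moreover have "eigenvalue G (\<mu> i)" for i
    unfolding \<mu>_def Omega_omega_r_in_orbit[OF assms] by (rule eigenvalue_G_orbit)
  ultimately obtain h where "h \<in> carrier_mat k k" "invertible_mat h" "h * G * minv h = mat_diag k \<mu>"
    using diagonalizable_of_distinct_eigenvalues[OF G_carrier] by blast
  moreover have "mat_diag k \<mu> = Omega k j \<cdot>\<^sub>m mat_diag k (\<lambda>i. omega_r k (i + 1))"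
    unfolding \<mu>_def by (rule eq_matI) (simp_all add: mat_diag_def)
  ultimately show ?thesis by auto
qed

end

theorem mainTheorem10:
  fixes k :: nat and j :: int and \<omega> :: real and A B C D g :: "complex mat"
  assumes "k \<ge> 1"
    and "even j" and "0 \<le> j" and "j < 2 * int k"
    and "- pi < \<omega>" and "\<omega> < pi"
    and "nonsingular_monad k A B C D"
    and "symmetry_witness k j \<omega> A B C D g"
  shows "\<exists>h. h \<in> carrier_mat k k \<and> invertible_mat h \<and>
           h * bigG k j g A * minv h = Omega k j \<cdot>\<^sub>m mat_diag k (\<lambda>i. omega_r k (i + 1))"
proof -
  interpret symmetric_monad k j \<omega> A B C D g
    by unfold_locales (use assms in simp_all)
  from \<open>even j\<close> obtain q where q: "j = 2 * q" by (rule evenE)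
  with \<open>0 \<le> j\<close> \<open>j < 2 * int k\<close> have "0 \<le> q" "q < int k" by simp_all
  hence "j = 2 * int (nat q)" "nat q < k" using q by simp_all
  thus ?thesis by (rule G_standard_form)
qed

end
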